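(* Let $X$ be a real Banach space, $x \in S(X)$, $\gamma > 0$ and $k \in \mathbb{N}$ be such that $1 - 2k(1-\gamma) > 0$. Then \[ \operatorname{diam}\big(S(B(X^* ), x, 1 - 2k(1-\gamma))\big) \leq 2k \, \operatorname{diam}\big(S(B(X^* ), x, \gamma)\big). \]
   Context: $B(\cdot)$, $S(\cdot)$ denote closed unit ball and unit sphere. For $x \in S(X)$ and real $\alpha$, the w*-slice is $S(B(X^* ), x, \alpha) := \{g \in B(X^* ) : g(x) > \alpha\}$ (the diameter of the empty set is taken as $0$). *)

theory Defs
  imports "HOL-Analysis.Analysis"
begin
(* Dual space X* = bounded linear functionals with operator norm; w*-slice of the dual unit ball. *)

definition wstar_slice :: "'a::real_normed_vector \<Rightarrow> real \<Rightarrow> ('a \<Rightarrow>\<^sub>L real) set" where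
  "wstar_slice x \<alpha> = {g. norm g \<le> 1 \<and> blinfun_apply g x > \<alpha>}"

end

theory Submission
  imports Defs
begin

text \<open>
  Fix a functional \<open>W\<close> with \<open>\<parallel>W\<parallel> \<le> 1\<close> and \<open>W x = 1\<close> (Hahn--Banach). For \<open>K \<ge> 1\<close> the affine
  contraction \<open>h \<mapsto> (h + (K - 1) W) / K\<close> maps the slice of level \<open>1 - K (1 - \<gamma>)\<close> into the
  slice of level \<open>\<gamma>\<close> and shrinks distances by the factor \<open>K\<close>; hence the diameter of the
  deeper slice is at most \<open>K\<close> times that of the shallower one.
\<close>

text \<open>The graph of a linear functional defined on a subspace and dominated by the norm.\<close>

definition norm_dominated :: "('a::real_normed_vector \<times> real) set \<Rightarrow> bool" where
  "norm_dominated G \<longleftrightarrow> subspace G \<and> (\<forall>(y, r) \<in> G. r \<le> norm y)"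

lemma norm_dominatedD:
  assumes "norm_dominated G" "(y, r) \<in> G"
  shows "r \<le> norm y"
  using assms unfolding norm_dominated_def by auto

lemma norm_dominated_zero:
  assumes "norm_dominated G"
  shows "(0, 0) \<in> G"
  using assms subspace_0[of G] unfolding norm_dominated_def by (simp add: zero_prod_def)

lemma norm_dominated_add:
  assumes "norm_dominated G" "(y, r) \<in> G" "(y', r') \<in> G"
  shows "(y + y', r + r') \<in> G"
  using assms subspace_add[of G "(y, r)" "(y', r')"] unfolding norm_dominated_def by simp

lemma norm_dominated_scale:
  assumes "norm_dominated G" "(y, r) \<in> G"
  shows "(a *\<^sub>R y, a * r) \<in> G"
  using assms subspace_scale[of G "(y, r)" a] unfolding norm_dominated_def by simp

lemma norm_dominated_Union_chain:
  assumes "C \<noteq> {}" "\<And>G. G \<in> C \<Longrightarrow> norm_dominated G"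
    and chain: "\<And>A B. A \<in> C \<Longrightarrow> B \<in> C \<Longrightarrow> A \<subseteq> B \<or> B \<subseteq> A"
  shows "norm_dominated (\<Union>C)"
proof -
  have "p + q \<in> \<Union>C" if pq: "p \<in> \<Union>C" "q \<in> \<Union>C" for p q
  proof -
    obtain A B where AB: "A \<in> C" "B \<in> C" "p \<in> A" "q \<in> B"
      using pq by blast
    then obtain D where "D \<in> C" "p \<in> D" "q \<in> D"
      using chain[OF AB(1,2)] by blast
    then show ?thesis
      using assms(2) subspace_add[of D p q] unfolding norm_dominated_def by blast
  qed
  moreover have "0 \<in> \<Union>C"
    using assms(1,2) subspace_0 unfolding norm_dominated_def by blast
  moreover have "c *\<^sub>R p \<in> \<Union>C" if "p \<in> \<Union>C" for c p
    using that assms(2) subspace_scale unfolding norm_dominated_def by blast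
  moreover have "\<forall>(y, r) \<in> \<Union>C. r \<le> norm y"
    using assms(2) unfolding norm_dominated_def by blast
  ultimately show ?thesis
    unfolding norm_dominated_def subspace_def by blast
qed

text \<open>The one-dimensional extension step of Hahn--Banach: a value \<open>c\<close> for the new direction \<open>z\<close>.\<close>

lemma norm_dominated_extension_value:
  assumes G: "norm_dominated G"
  obtains c where "\<And>y r t. (y, r) \<in> G \<Longrightarrow> r + t * c \<le> norm (y + t *\<^sub>R z)"
proof -
  define S where "S = (\<lambda>(u, \<rho>). \<rho> - norm (u - z)) ` G"
  have S_bound: "s \<le> norm (v + z) - \<sigma>" if "s \<in> S" "(v, \<sigma>) \<in> G" for s v \<sigma>
  proof -
    obtain u \<rho> where u: "(u, \<rho>) \<in> G" "s = \<rho> - norm (u - z)"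
      using \<open>s \<in> S\<close> unfolding S_def by auto
    have "\<rho> + \<sigma> \<le> norm (u + v)"
      using norm_dominatedD[OF G norm_dominated_add[OF G u(1) that(2)]] .
    also have "\<dots> \<le> norm (u - z) + norm (v + z)"
      using norm_triangle_ineq[of "u - z" "v + z"] by simp
    finally show ?thesis
      using u(2) by linarith
  qed
  have "S \<noteq> {}"
    using norm_dominated_zero[OF G] unfolding S_def by blast
  have bdd: "bdd_above S"
    using S_bound norm_dominated_zero[OF G] unfolding bdd_above_def by blast
  have below: "\<rho> - norm (u - z) \<le> Sup S" if "(u, \<rho>) \<in> G" for u \<rho>
    using that by (intro cSup_upper[OF _ bdd]) (force simp: S_def)
  have above: "Sup S \<le> norm (v + z) - \<sigma>" if "(v, \<sigma>) \<in> G" for v \<sigma>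
    using \<open>S \<noteq> {}\<close> S_bound that by (blast intro: cSup_least)
  have "r + t * Sup S \<le> norm (y + t *\<^sub>R z)" if yr: "(y, r) \<in> G" for y r t
  proof (cases t "0 :: real" rule: linorder_cases)
    case less
    define s where "s = - 1 / t"
    have s: "s > 0" "(- t) * s = 1" "s * t = - 1"
      using less by (simp_all add: s_def)
    have "s *\<^sub>R y - z = s *\<^sub>R (y + t *\<^sub>R z)"
      using s(3) by (simp add: scaleR_add_right)
    then have "s * (r - norm (y + t *\<^sub>R z)) \<le> Sup S"
      using below[OF norm_dominated_scale[OF G yr, of s]] s(1) by (simp add: right_diff_distrib)
    then have "(- t) * (s * (r - norm (y + t *\<^sub>R z))) \<le> (- t) * Sup S"
      using less by (intro mult_left_mono) auto
    then show ?thesis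
      using s(2) by (simp add: mult.assoc[symmetric])
  next
    case equal
    then show ?thesis
      using norm_dominatedD[OF G yr] by simp
  next
    case greater
    define s where "s = 1 / t"
    have s: "s > 0" "t * s = 1" "s * t = 1"
      using greater by (simp_all add: s_def)
    have "s *\<^sub>R y + z = s *\<^sub>R (y + t *\<^sub>R z)"
      using s(3) by (simp add: scaleR_add_right)
    then have "Sup S \<le> s * (norm (y + t *\<^sub>R z) - r)"
      using above[OF norm_dominated_scale[OF G yr, of s]] s(1) by (simp add: right_diff_distrib)
    then have "t * Sup S \<le> t * (s * (norm (y + t *\<^sub>R z) - r))"
      using greater by (intro mult_left_mono) auto
    then show ?thesis
      using s(2) by (simp add: mult.assoc[symmetric])
  qed
  then show ?thesis
    using that by blast
qed

lemma norm_dominated_extend: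
  assumes G: "norm_dominated G" and z: "z \<notin> fst ` G"
  shows "\<exists>G'. norm_dominated G' \<and> G \<subset> G'"
proof -
  obtain c where c: "\<And>y r t. (y, r) \<in> G \<Longrightarrow> r + t * c \<le> norm (y + t *\<^sub>R z)"
    using norm_dominated_extension_value[OF G] by blast
  define G' where "G' = {p + q | p q. p \<in> G \<and> q \<in> span {(z, c)}}"
  have "subspace G'"
    unfolding G'_def using G subspace_sums subspace_span unfolding norm_dominated_def by blast
  moreover have "r \<le> norm y" if yr: "(y, r) \<in> G'" for y r
  proof -
    obtain p q where pq: "(y, r) = p + q" "p \<in> G" "q \<in> span {(z, c)}"
      using yr unfolding G'_def by blast
    obtain t where "q = t *\<^sub>R (z, c)"
      using pq(3) unfolding span_singleton by blast
    then have "y = fst p + t *\<^sub>R z" "r = snd p + t * c"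
      using pq(1) by (simp_all add: prod_eq_iff)
    then show ?thesis
      using c[of "fst p" "snd p" t] pq(2) by simp
  qed
  moreover have "G \<subseteq> G'"
  proof
    fix p assume "p \<in> G"
    moreover have "p = p + 0" "0 \<in> span {(z, c)}"
      by (simp_all add: span_zero)
    ultimately show "p \<in> G'"
      unfolding G'_def by blast
  qed
  moreover have "(z, c) \<in> G'"
  proof -
    have "(z, c) = 0 + (z, c)" "0 \<in> G" "(z, c) \<in> span {(z, c)}"
      using norm_dominated_zero[OF G] by (simp_all add: span_base zero_prod_def)
    then show ?thesis
      unfolding G'_def by blast
  qed
  moreover have "(z, c) \<notin> G"
    using z by (auto intro: rev_image_eqI)
  ultimately show ?thesis
    unfolding norm_dominated_def by blast
qed

lemma norm_dominated_total_graph: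
  assumes G: "norm_dominated G" and total: "fst ` G = UNIV"
  obtains W :: "'a::real_normed_vector \<Rightarrow>\<^sub>L real"
  where "norm W \<le> 1" "\<And>y r. (y, r) \<in> G \<Longrightarrow> W y = r"
proof -
  have unique: "r = s" if "(y, r) \<in> G" "(y, s) \<in> G" for y r s
  proof -
    have "(0, r - s) \<in> G" "(0, s - r) \<in> G"
      using norm_dominated_add[OF G that(1) norm_dominated_scale[OF G that(2), of "-1"]]
        norm_dominated_add[OF G that(2) norm_dominated_scale[OF G that(1), of "-1"]]
      by simp_all
    from this[THEN norm_dominatedD[OF G]] show ?thesis
      by simp
  qed
  have "\<exists>r. (y, r) \<in> G" for y
  proof -
    have "y \<in> fst ` G"
      using total by simp
    then show ?thesis
      by force
  qed
  then obtain w where graph: "\<And>y. (y, w y) \<in> G"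
    by metis
  have "w (a + b) = w a + w b" for a b
    using unique[OF graph norm_dominated_add[OF G graph graph]] .
  moreover have scale: "w (c *\<^sub>R a) = c * w a" for c a
    using unique[OF graph norm_dominated_scale[OF G graph]] .
  moreover have bound: "\<bar>w y\<bar> \<le> norm y" for y
  proof -
    have "- w y = w (- y)"
      using scale[of "-1" y] by simp
    also have "\<dots> \<le> norm y"
      using norm_dominatedD[OF G graph, of "- y"] by simp
    finally show ?thesis
      using norm_dominatedD[OF G graph, of y] by linarith
  qed
  ultimately have w: "bounded_linear w"
    by (intro bounded_linear_intro[where K = 1]) auto
  show ?thesis
  proof
    show "norm (Blinfun w) \<le> 1"
      using bound by (intro norm_blinfun_bound) (auto simp: bounded_linear_Blinfun_apply[OF w])
    show "Blinfun w y = r" if "(y, r) \<in> G" for y r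
      using unique[OF graph that] by (simp add: bounded_linear_Blinfun_apply[OF w])
  qed
qed

lemma norm_dominated_extend_total:
  assumes "norm_dominated G0"
  obtains G where "norm_dominated G" "G0 \<subseteq> G" "fst ` G = UNIV"
proof -
  define A where "A = {G. norm_dominated G \<and> G0 \<subseteq> G}"
  have "\<exists>M\<in>A. \<forall>G\<in>A. M \<subseteq> G \<longrightarrow> G = M"
  proof (rule subset_Zorn_nonempty)
    show "A \<noteq> {}"
      using assms unfolding A_def by blast
  next
    fix C assume C: "C \<noteq> {}" "subset.chain A C"
    then have CA: "C \<subseteq> A" and chain: "\<And>X Y. X \<in> C \<Longrightarrow> Y \<in> C \<Longrightarrow> X \<subseteq> Y \<or> Y \<subseteq> X"
      unfolding subset_chain_def by auto
    have "norm_dominated (\<Union>C)"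
      using CA by (intro norm_dominated_Union_chain C(1) chain) (auto simp: A_def)
    moreover have "G0 \<subseteq> \<Union>C"
      using CA C(1) unfolding A_def by blast
    ultimately show "\<Union>C \<in> A"
      unfolding A_def by blast
  qed
  then obtain M where M: "norm_dominated M" "G0 \<subseteq> M"
    and maximal: "\<And>G. norm_dominated G \<Longrightarrow> M \<subseteq> G \<Longrightarrow> G = M"
    unfolding A_def by auto
  have "y \<in> fst ` M" for y
  proof (rule ccontr)
    assume "y \<notin> fst ` M"
    then obtain G where "norm_dominated G" "M \<subset> G"
      using norm_dominated_extend[OF M(1)] by blast
    then show False
      using maximal[of G] by blast
  qed
  then show ?thesis
    using that M by blast
qed

lemma exists_norming_functional:
  fixes x :: "'a::real_normed_vector"
  obtains W :: "'a \<Rightarrow>\<^sub>L real" where "norm W \<le> 1" "W x = norm x"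
proof -
  have "r \<le> norm y" if yr: "(y, r) \<in> span {(x, norm x)}" for y r
  proof -
    obtain t where "y = t *\<^sub>R x" "r = t * norm x"
      using yr unfolding span_singleton by auto
    then show ?thesis
      by (simp add: mult_right_mono)
  qed
  then have "norm_dominated (span {(x, norm x)})"
    unfolding norm_dominated_def by (auto simp: subspace_span)
  then obtain G where G: "norm_dominated G" "span {(x, norm x)} \<subseteq> G" "fst ` G = UNIV"
    by (rule norm_dominated_extend_total)
  then have "(x, norm x) \<in> G"
    using span_base[of "(x, norm x)"] by blast
  then show ?thesis
    using that norm_dominated_total_graph[OF G(1,3)] by metis
qed

lemma wstar_slice_eq_empty:
  fixes x :: "'a::real_normed_vector"
  assumes "norm x \<le> \<alpha>"
  shows "wstar_slice x \<alpha> = {}"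
proof -
  have "g x \<le> \<alpha>" if "norm g \<le> 1" for g :: "'a \<Rightarrow>\<^sub>L real"
    using norm_blinfun[of g x] that assms mult_right_mono[OF that, of "norm x"] by simp
  then show ?thesis
    unfolding wstar_slice_def by fastforce
qed

lemma bounded_wstar_slice: "bounded (wstar_slice x \<alpha>)"
  by (rule bounded_subset[OF bounded_cball[of 0 1]]) (auto simp: wstar_slice_def)

lemma wstar_slice_average_with_norming:
  fixes W h :: "'a::real_normed_vector \<Rightarrow>\<^sub>L real"
  assumes W: "norm W \<le> 1" "W x = 1" and K: "K \<ge> 1"
    and h: "h \<in> wstar_slice x (1 - K * (1 - \<gamma>))"
  shows "(1 / K) *\<^sub>R (h + (K - 1) *\<^sub>R W) \<in> wstar_slice x \<gamma>"
proof -
  have h': "norm h \<le> 1" "h x > 1 - K * (1 - \<gamma>)"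
    using h unfolding wstar_slice_def by auto
  have "norm (h + (K - 1) *\<^sub>R W) \<le> norm h + (K - 1) * norm W"
    using norm_triangle_ineq[of h "(K - 1) *\<^sub>R W"] K by simp
  also have "\<dots> \<le> 1 + (K - 1) * 1"
    using h'(1) W(1) K by (intro add_mono mult_left_mono) auto
  finally have "norm ((1 / K) *\<^sub>R (h + (K - 1) *\<^sub>R W)) \<le> 1"
    using K by (simp add: divide_le_eq)
  moreover have "((1 / K) *\<^sub>R (h + (K - 1) *\<^sub>R W)) x = (h x + (K - 1)) / K"
    using W(2) by (simp add: blinfun.scaleR_left blinfun.add_left)
  moreover have "(h x + (K - 1)) / K > \<gamma>"
    using h'(2) K by (simp add: field_simps)
  ultimately show ?thesis
    unfolding wstar_slice_def by simp
qed

lemma diameter_wstar_slice_le: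
  fixes x :: "'a::real_normed_vector"
  assumes "norm x = 1" and K: "K \<ge> 1"
  shows "diameter (wstar_slice x (1 - K * (1 - \<gamma>))) \<le> K * diameter (wstar_slice x \<gamma>)"
proof (rule diameter_le)
  show "wstar_slice x (1 - K * (1 - \<gamma>)) \<noteq> {} \<or> 0 \<le> K * diameter (wstar_slice x \<gamma>)"
    using K diameter_ge_0[OF bounded_wstar_slice, of x \<gamma>] by simp
next
  obtain W :: "'a \<Rightarrow>\<^sub>L real" where W: "norm W \<le> 1" "W x = 1"
    using exists_norming_functional[of x] assms(1) by metis
  define shrink where "shrink h = (1 / K) *\<^sub>R (h + (K - 1) *\<^sub>R W)" for h
  fix f g assume "f \<in> wstar_slice x (1 - K * (1 - \<gamma>))" "g \<in> wstar_slice x (1 - K * (1 - \<gamma>))"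
  then have "dist (shrink f) (shrink g) \<le> diameter (wstar_slice x \<gamma>)"
    unfolding shrink_def
    by (intro diameter_bounded_bound bounded_wstar_slice wstar_slice_average_with_norming W K)
  moreover have "shrink f - shrink g = (1 / K) *\<^sub>R (f - g)"
    unfolding shrink_def by (simp add: algebra_simps)
  ultimately show "norm (f - g) \<le> K * diameter (wstar_slice x \<gamma>)"
    using K by (simp add: dist_norm divide_le_eq mult.commute)
qed

theorem mainTheorem5:
  fixes x :: "'a::banach" and \<gamma> :: real and k :: nat
  assumes "norm x = 1" and "\<gamma> > 0" and "1 - 2 * real k * (1 - \<gamma>) > 0"
  shows "diameter (wstar_slice x (1 - 2 * real k * (1 - \<gamma>)))
           \<le> 2 * real k * diameter (wstar_slice x \<gamma>)"
proof (cases "k = 0")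
  case True
  then show ?thesis
    using wstar_slice_eq_empty[of x 1] assms(1) by simp
next
  case False
  then show ?thesis
    using diameter_wstar_slice_le[OF assms(1), of "2 * real k" \<gamma>] by simp
qed

end
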